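(* For every integer $r\ge 0$ and all real $x$, $$\operatorname{sech}^{2r+1}x=\frac{(-1)^r}{(2r)!}\prod_{k=1}^{r}\Big(\frac{d^2}{dx^2}-(2k-1)^2\Big)\operatorname{sech}x=\frac{1}{(2r)!}\sum_{\rho=0}^{r}(-1)^{\rho}\,\mathcal G^r_\rho\,\frac{d^{2\rho}}{dx^{2\rho}}\operatorname{sech}x ,$$ where the integers $\mathcal G^r_\rho$ ($0\le\rho\le r$) are determined by $\mathcal G^0_0=1$, the conventions $\mathcal G^r_{-1}=\mathcal G^r_{r+1}=0$, and the recursion $\mathcal G^r_\rho=(2r-1)^2\mathcal G^{r-1}_\rho+\mathcal G^{r-1}_{\rho-1}$ for $r\ge1$, $0\le\rho\le r$. In particular $\mathcal G^r_r=1$.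
   Context: The empty product (for $r=0$) is the identity operator. *)

theory Defs
  imports "HOL-Analysis.Analysis"
begin

definition sech :: "real \<Rightarrow> real" where
  "sech x = 1 / cosh x"

fun sech_ops :: "nat \<Rightarrow> (real \<Rightarrow> real) \<Rightarrow> (real \<Rightarrow> real)" where
  "sech_ops 0 f = f"
| "sech_ops (Suc r) f =
     (\<lambda>x. deriv (deriv (sech_ops r f)) x - (2 * real r + 1)^2 * sech_ops r f x)"

text \<open>The integers G^r_rho, with G^r_rho = 0 outside 0 <= rho <= r (the conventions
  G^r_{-1} = 0 handled by the rho = 0 case, G^r_{r+1} = 0 automatic).\<close>
fun G :: "nat \<Rightarrow> nat \<Rightarrow> int" where
  "G 0 \<rho> = (if \<rho> = 0 then 1 else 0)"
| "G (Suc r) \<rho> = (2 * int r + 1)^2 * G r \<rho> + (if \<rho> = 0 then 0 else G r (\<rho> - 1))"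

end

theory Submission
  imports Defs "HOL-Computational_Algebra.Polynomial"
begin

text \<open>Since \<open>sech' = - sech * tanh\<close> and \<open>tanh' = sech^2\<close>, a direct computation gives
  \<open>(D^2 - m^2) sech^m = - m (m + 1) sech^(m+2)\<close>.  Applying the factors \<open>D^2 - (2k - 1)^2\<close>
  one after the other to \<open>sech\<close> therefore telescopes to \<open>(-1)^r (2r)! sech^(2r+1)\<close>.
  The second formula is the expansion of the operator product as a polynomial in \<open>D^2\<close>:
  composing with one more factor \<open>D^2 - (2r + 1)^2\<close> transforms the coefficients exactly by
  the recursion defining \<open>G\<close>.  This expansion holds for every smooth function, and \<open>sech\<close>
  is smooth because each of its derivatives is a polynomial in \<open>tanh\<close> times \<open>sech\<close>.\<close>

lemma tanh_squared_eq: "tanh x ^ 2 = 1 - sech x ^ 2"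
proof -
  have "tanh x ^ 2 + sech x ^ 2 = (sinh x ^ 2 + 1) / cosh x ^ 2"
    by (simp add: tanh_def sech_def power_divide add_divide_distrib)
  also have "\<dots> = 1"
    using cosh_real_pos[of x] by (simp add: cosh_square_eq[symmetric])
  finally show ?thesis by simp
qed

lemma has_real_derivative_sech: "(sech has_real_derivative - (sech x * tanh x)) (at x)"
proof -
  have "((\<lambda>x. 1 / cosh x) has_real_derivative - sinh x / cosh x ^ 2) (at x)"
    using cosh_real_pos[of x] by (auto intro!: derivative_eq_intros simp: power2_eq_square)
  then show ?thesis
    using cosh_real_pos[of x] by (simp add: sech_def[abs_def] tanh_def power2_eq_square)
qed

lemma has_real_derivative_tanh_real: "(tanh has_real_derivative 1 - tanh x ^ 2) (at (x::real))"
  using cosh_real_pos[of x] by (auto intro!: derivative_eq_intros)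

lemma has_real_derivative_sech_power:
  "((\<lambda>x. sech x ^ m) has_real_derivative - (m * (sech x ^ m * tanh x))) (at x)"
  by (rule derivative_eq_intros refl has_real_derivative_sech | cases m; simp)+

lemma has_real_derivative_sech_power_mult_tanh:
  "((\<lambda>x. sech x ^ m * tanh x) has_real_derivative
     (real m + 1) * sech x ^ (m + 2) - m * sech x ^ m) (at x)"
proof -
  have "((\<lambda>x. sech x ^ m * tanh x) has_real_derivative
      - (m * (sech x ^ m * tanh x)) * tanh x + (1 - tanh x ^ 2) * sech x ^ m) (at x)"
    by (rule DERIV_mult[OF has_real_derivative_sech_power has_real_derivative_tanh_real])
  moreover have "- (m * (sech x ^ m * tanh x)) * tanh x + (1 - tanh x ^ 2) * sech x ^ m
      = (real m + 1) * sech x ^ (m + 2) - m * sech x ^ m"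
  proof -
    have identity: "T\<^sup>2 = 1 - S\<^sup>2 \<Longrightarrow> - (k * (P * T)) * T + (1 - T\<^sup>2) * P = (k + 1) * (P * S\<^sup>2) - k * P"
      for T S P k :: real
      by algebra
    show ?thesis
      unfolding power_add by (rule identity[OF tanh_squared_eq])
  qed
  ultimately show ?thesis by simp
qed

lemma deriv2_const_mult_sech_power:
  "deriv (deriv (\<lambda>x. c * sech x ^ m)) x
     = c * (m\<^sup>2 * sech x ^ m - m * (real m + 1) * sech x ^ (m + 2))"
proof -
  have "deriv (\<lambda>x. c * sech x ^ m) = (\<lambda>x. - (c * m) * (sech x ^ m * tanh x))"
    by (rule ext, rule DERIV_imp_deriv)
       (use DERIV_cmult[OF has_real_derivative_sech_power, of c m] in \<open>simp add: mult.assoc\<close>)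
  moreover have "((\<lambda>x. - (c * m) * (sech x ^ m * tanh x)) has_real_derivative
      - (c * m) * ((real m + 1) * sech x ^ (m + 2) - m * sech x ^ m)) (at x)"
    by (intro DERIV_cmult has_real_derivative_sech_power_mult_tanh)
  ultimately show ?thesis
    by (simp add: DERIV_imp_deriv power2_eq_square algebra_simps)
qed

lemma sech_ops_sech: "sech_ops r sech = (\<lambda>x. (-1)^r * fact (2*r) * sech x ^ (2*r+1))"
proof (induction r)
  case 0
  show ?case by (simp add: fun_eq_iff)
next
  case (Suc r)
  let ?c = "(-1)^r * fact (2*r) :: real" and ?m = "2*r+1"
  show ?case
  proof
    fix x
    have "sech_ops (Suc r) sech x
        = deriv (deriv (\<lambda>x. ?c * sech x ^ ?m)) x - real ?m ^ 2 * (?c * sech x ^ ?m)"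
      by (simp add: Suc)
    also have "\<dots> = - (?c * ((2*r+1) * (2*r+2))) * sech x ^ (?m + 2)"
      unfolding deriv2_const_mult_sech_power by (simp add: power2_eq_square algebra_simps)
    also have "\<dots> = (-1)^Suc r * fact (2 * Suc r) * sech x ^ (2 * Suc r + 1)"
      by (simp add: algebra_simps)
    finally show "sech_ops (Suc r) sech x = (-1)^Suc r * fact (2 * Suc r) * sech x ^ (2 * Suc r + 1)" .
  qed
qed

lemma has_real_derivative_poly_tanh_mult_sech:
  "((\<lambda>x. poly p (tanh x) * sech x) has_real_derivative
     poly (pderiv p * [:1, 0, -1:] - p * [:0, 1:]) (tanh x) * sech x) (at x)"
proof -
  have "((\<lambda>x. poly p (tanh x) * sech x) has_real_derivative
      poly (pderiv p) (tanh x) * (1 - tanh x ^ 2) * sech x + - (sech x * tanh x) * poly p (tanh x)) (at x)"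
    by (rule DERIV_mult DERIV_chain2[OF poly_DERIV has_real_derivative_tanh_real]
        has_real_derivative_sech)+
  then show ?thesis
    by (simp add: algebra_simps power2_eq_square)
qed

lemma higher_deriv_sech_eq_poly_tanh:
  "\<exists>p. (deriv ^^ n) sech = (\<lambda>x. poly p (tanh x) * sech x)"
proof (induction n)
  case 0
  show ?case by (rule exI[of _ 1]) (simp add: fun_eq_iff)
next
  case (Suc n)
  then obtain p where p: "(deriv ^^ n) sech = (\<lambda>x. poly p (tanh x) * sech x)" ..
  have "(deriv ^^ Suc n) sech
      = (\<lambda>x. poly (pderiv p * [:1, 0, -1:] - p * [:0, 1:]) (tanh x) * sech x)"
    unfolding funpow.simps comp_def p
    by (rule ext DERIV_imp_deriv has_real_derivative_poly_tanh_mult_sech)+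
  then show ?case ..
qed

lemma has_real_derivative_higher_deriv_sech:
  "((deriv ^^ n) sech has_real_derivative (deriv ^^ Suc n) sech x) (at x)"
proof -
  obtain p where p: "(deriv ^^ n) sech = (\<lambda>x. poly p (tanh x) * sech x)"
    using higher_deriv_sech_eq_poly_tanh ..
  show ?thesis
    using has_real_derivative_poly_tanh_mult_sech[of p x]
    by (simp add: p DERIV_imp_deriv[OF has_real_derivative_poly_tanh_mult_sech])
qed

lemma G_eq_0_above_diagonal: "r < \<rho> \<Longrightarrow> G r \<rho> = 0"
  by (induction r arbitrary: \<rho>) auto

lemma G_diagonal: "G r r = 1"
  by (induction r) (auto simp: G_eq_0_above_diagonal)

lemma alternating_sum_G_Suc:
  fixes F :: "nat \<Rightarrow> real"
  shows "(\<Sum>\<rho>\<le>Suc r. (-1)^\<rho> * of_int (G (Suc r) \<rho>) * F \<rho>)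
    = (2 * real r + 1)^2 * (\<Sum>\<rho>\<le>r. (-1)^\<rho> * of_int (G r \<rho>) * F \<rho>)
      - (\<Sum>\<rho>\<le>r. (-1)^\<rho> * of_int (G r \<rho>) * F (Suc \<rho>))"
proof -
  have "(\<Sum>\<rho>\<le>Suc r. (-1)^\<rho> * of_int (G (Suc r) \<rho>) * F \<rho>)
      = (2 * real r + 1)^2 * (\<Sum>\<rho>\<le>Suc r. (-1)^\<rho> * of_int (G r \<rho>) * F \<rho>)
        + (\<Sum>\<rho>\<le>Suc r. (-1)^\<rho> * of_int (if \<rho> = 0 then 0 else G r (\<rho> - 1)) * F \<rho>)"
    by (simp add: sum.distrib sum_distrib_left algebra_simps)
  also have "(\<Sum>\<rho>\<le>Suc r. (-1)^\<rho> * of_int (G r \<rho>) * F \<rho>)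
      = (\<Sum>\<rho>\<le>r. (-1)^\<rho> * of_int (G r \<rho>) * F \<rho>)"
    by (simp add: G_eq_0_above_diagonal)
  also have "(\<Sum>\<rho>\<le>Suc r. (-1)^\<rho> * of_int (if \<rho> = 0 then 0 else G r (\<rho> - 1)) * F \<rho>)
      = - (\<Sum>\<rho>\<le>r. (-1)^\<rho> * of_int (G r \<rho>) * F (Suc \<rho>))"
    by (subst sum.atMost_Suc_shift) (simp add: sum_negf)
  finally show ?thesis by simp
qed

lemma deriv_const_mult_sum_higher_deriv:
  fixes f :: "real \<Rightarrow> real"
  assumes smooth: "\<And>n x. ((deriv ^^ n) f has_real_derivative (deriv ^^ Suc n) f x) (at x)"
  shows "deriv (\<lambda>x. c * (\<Sum>i\<in>A. a i * (deriv ^^ k i) f x))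
    = (\<lambda>x. c * (\<Sum>i\<in>A. a i * (deriv ^^ Suc (k i)) f x))"
  by (rule ext DERIV_imp_deriv derivative_eq_intros refl smooth | simp add: mult.commute)+

lemma sech_ops_eq_sum_higher_deriv:
  fixes f :: "real \<Rightarrow> real"
  assumes smooth: "\<And>n x. ((deriv ^^ n) f has_real_derivative (deriv ^^ Suc n) f x) (at x)"
  shows "sech_ops r f
    = (\<lambda>x. (-1)^r * (\<Sum>\<rho>\<le>r. (-1)^\<rho> * of_int (G r \<rho>) * (deriv ^^ (2*\<rho>)) f x))"
proof (induction r)
  case 0
  show ?case by (simp add: fun_eq_iff)
next
  case (Suc r)
  let ?a = "\<lambda>\<rho>. (-1)^\<rho> * (of_int (G r \<rho>) :: real)"
  have deriv2: "deriv (deriv (sech_ops r f))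
      = (\<lambda>x. (-1)^r * (\<Sum>\<rho>\<le>r. ?a \<rho> * (deriv ^^ Suc (Suc (2*\<rho>))) f x))"
    unfolding Suc deriv_const_mult_sum_higher_deriv[OF smooth] ..
  show ?case
  proof
    fix x
    have "sech_ops (Suc r) f x
        = (-1)^r * (\<Sum>\<rho>\<le>r. ?a \<rho> * (deriv ^^ Suc (Suc (2*\<rho>))) f x)
          - (2 * real r + 1)^2 * ((-1)^r * (\<Sum>\<rho>\<le>r. ?a \<rho> * (deriv ^^ (2*\<rho>)) f x))"
      by (simp only: sech_ops.simps deriv2) (simp only: Suc)
    also have "\<dots> = (-1)^Suc r
        * (\<Sum>\<rho>\<le>Suc r. (-1)^\<rho> * of_int (G (Suc r) \<rho>) * (deriv ^^ (2*\<rho>)) f x)"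
      unfolding alternating_sum_G_Suc[of r "\<lambda>\<rho>. (deriv ^^ (2*\<rho>)) f x"]
      by (simp add: algebra_simps)
    finally show "sech_ops (Suc r) f x = (-1)^Suc r
        * (\<Sum>\<rho>\<le>Suc r. (-1)^\<rho> * of_int (G (Suc r) \<rho>) * (deriv ^^ (2*\<rho>)) f x)" .
  qed
qed

theorem mainTheorem1:
  fixes r :: nat and x :: real
  shows "sech x ^ (2*r+1) = (-1)^r / fact (2*r) * sech_ops r sech x
       \<and> sech x ^ (2*r+1) = 1 / fact (2*r) *
           (\<Sum>\<rho>\<le>r. (-1)^\<rho> * of_int (G r \<rho>) * (deriv ^^ (2*\<rho>)) sech x)
       \<and> G r r = 1"
proof (intro conjI)
  have sign_squared: "(-1::real)^r * (-1)^r = 1"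
    by (simp flip: power_mult_distrib)
  show closed_form: "sech x ^ (2*r+1) = (-1)^r / fact (2*r) * sech_ops r sech x"
    using sign_squared by (simp add: sech_ops_sech)
  show "sech x ^ (2*r+1) = 1 / fact (2*r) *
           (\<Sum>\<rho>\<le>r. (-1)^\<rho> * of_int (G r \<rho>) * (deriv ^^ (2*\<rho>)) sech x)"
    using sign_squared
    unfolding closed_form sech_ops_eq_sum_higher_deriv[OF has_real_derivative_higher_deriv_sech]
    by (simp add: mult.assoc[symmetric])
  show "G r r = 1"
    by (rule G_diagonal)
qed

end
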